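(* Let $A$ be a Hausdorff abelian topological group such that both $\alpha_A$ and $\alpha_{\hat A}$ are continuous. Then the following are equivalent: (i) $\alpha_A^{-1}(F)$ is compact in $A$ for every compact subset $F\subseteq\hat{\hat A}$; (ii) $A$ has the quasi-convex compactness property.
   Context: $\mathbb{T}=\mathbb{R}/\mathbb{Z}$, $\Lambda_1$ is the image of $[-\tfrac14,\tfrac14]$ in $\mathbb{T}$. For an abelian topological group $B$, $\hat B$ is the group of continuous homomorphisms $B\to\mathbb{T}$ with the compact-open topology and $\alpha_B\colon B\to\hat{\hat B}$, $\alpha_B(b)(\chi)=\chi(b)$. For $S\subseteq A$, $S^\vartriangleright=\{\chi\in\hat A\mid\chi(S)\subseteq\Lambda_1\}$; for $\Phi\subseteq\hat A$, $\Phi^\vartriangleleft=\{a\in A\mid\chi(a)\in\Lambda_1\ \forall\chi\in\Phi\}$. $A$ has the quasi-convex compactness property if $K^{\vartriangleright\vartriangleleft}$ is compact for every compact $K\subseteq A$. *)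

theory Defs
  imports "HOL-Analysis.Analysis"
begin

text \<open>The circle group T = R/Z is realised as the unit circle in the complex plane,
  via the isomorphism t + Z |-> cis (2 pi t); its topology is the subspace topology.\<close>

definition circle_top :: "complex topology" where
  "circle_top = subtopology euclidean (sphere 0 1)"

definition Lambda1 :: "complex set" where
  "Lambda1 = (\<lambda>t. cis (2 * pi * t)) ` {-1/4 .. 1/4}"

definition compact_open_top :: "'a topology \<Rightarrow> 'b topology \<Rightarrow> ('a \<Rightarrow> 'b) topology" where
  "compact_open_top X Y =
     topology_generated_by {{f. f ` K \<subseteq> U} | K U. compactin X K \<and> openin Y U}"

text \<open>An abelian topological group is given by a topology X (carrier = topspace X) and
  a group operation m. Its dual: continuous homomorphisms into T, represented as
  extensional functions (value undefined outside the carrier).\<close>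
definition chars :: "'a topology \<Rightarrow> ('a \<Rightarrow> 'a \<Rightarrow> 'a) \<Rightarrow> ('a \<Rightarrow> complex) set" where
  "chars X m = {\<gamma> \<in> extensional (topspace X). continuous_map X circle_top \<gamma> \<and>
      (\<forall>x\<in>topspace X. \<forall>y\<in>topspace X. \<gamma> (m x y) = \<gamma> x * \<gamma> y)}"

definition char_top :: "'a topology \<Rightarrow> ('a \<Rightarrow> 'a \<Rightarrow> 'a) \<Rightarrow> ('a \<Rightarrow> complex) topology" where
  "char_top X m = subtopology (compact_open_top X circle_top) (chars X m)"

definition char_mult :: "'a topology \<Rightarrow> ('a \<Rightarrow> complex) \<Rightarrow> ('a \<Rightarrow> complex) \<Rightarrow> ('a \<Rightarrow> complex)" where
  "char_mult X \<gamma> \<psi> = restrict (\<lambda>x. \<gamma> x * \<psi> x) (topspace X)"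

definition eval_map :: "'a topology \<Rightarrow> ('a \<Rightarrow> 'a \<Rightarrow> 'a) \<Rightarrow> 'a \<Rightarrow> (('a \<Rightarrow> complex) \<Rightarrow> complex)" where
  "eval_map X m b = restrict (\<lambda>\<gamma>. \<gamma> b) (chars X m)"

definition polar_right :: "'a topology \<Rightarrow> ('a \<Rightarrow> 'a \<Rightarrow> 'a) \<Rightarrow> 'a set \<Rightarrow> ('a \<Rightarrow> complex) set" where
  "polar_right X m S = {\<gamma> \<in> chars X m. \<gamma> ` S \<subseteq> Lambda1}"

definition polar_left :: "'a topology \<Rightarrow> ('a \<Rightarrow> 'a \<Rightarrow> 'a) \<Rightarrow> ('a \<Rightarrow> complex) set \<Rightarrow> 'a set" where
  "polar_left X m \<Phi> = {a \<in> topspace X. \<forall>\<gamma>\<in>\<Phi>. \<gamma> a \<in> Lambda1}"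

definition qc_compactness_property :: "'a topology \<Rightarrow> ('a \<Rightarrow> 'a \<Rightarrow> 'a) \<Rightarrow> bool" where
  "qc_compactness_property X m \<longleftrightarrow>
     (\<forall>K. compactin X K \<longrightarrow> compactin X (polar_left X m (polar_right X m K)))"

end

theory Submission
  imports Defs
begin

text \<open>
  Write \<Gamma> for the dual group of A and K^\<rhd>, K^\<rhd>\<rhd>, K^\<rhd>\<lhd> for the polars of K \<subseteq> A. Let K be
  compact. If a character \<phi> maps all multiples x, 2x, ..., mx with x \<in> K into Lambda1, then the
  powers \<phi>^k with k \<le> m lie in K^\<rhd>; so every homomorphism \<omega> on \<Gamma> with \<omega>(K^\<rhd>) \<subseteq> Lambda1 has
  \<omega>(\<phi>)^k \<in> Lambda1 for k \<le> m, which forces |\<omega>(\<phi>) - 1| \<le> \<pi>/2m. Hence K^\<rhd>\<rhd> is an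
  equicontinuous family on \<Gamma>, closed in the compact product of circles, and on equicontinuous
  families the pointwise and the compact-open topology agree: K^\<rhd>\<rhd> is compact in the bidual.
  Its preimage under \<alpha>_A is K^\<rhd>\<lhd>, so (i) implies (ii).

  The same estimate shows that every neighbourhood of the trivial character in \<Gamma> contains the
  polar of a compact set. For compact F in the bidual, continuity of \<alpha>_\<Gamma> at the trivial
  character thus yields a compact K with \<alpha>_A^-1(F) \<subseteq> K^\<rhd>\<lhd>; since the bidual is Hausdorff,
  \<alpha>_A^-1(F) is also closed, hence compact under (ii).
\<close>

section \<open>Powers of points on the circle\<close>

lemma Lambda1_eq: "Lambda1 = {z. cmod z = 1 \<and> 0 \<le> Re z}"
proof (intro set_eqI iffI)
  fix z assume "z \<in> Lambda1"
  then obtain t where t: "t \<in> {-1/4..1/4}" "z = cis (2*pi*t)" unfolding Lambda1_def by auto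
  have "2*pi*(-1/4) \<le> 2*pi*t" "2*pi*t \<le> 2*pi*(1/4)"
    using t(1) by (intro mult_left_mono; simp)+
  then have "0 \<le> cos (2*pi*t)" by (intro cos_ge_zero) auto
  then show "z \<in> {z. cmod z = 1 \<and> 0 \<le> Re z}" using t by auto
next
  fix z assume z: "z \<in> {z. cmod z = 1 \<and> 0 \<le> Re z}"
  have b: "-1 \<le> Im z" "Im z \<le> 1" using abs_Im_le_cmod[of z] z by auto
  define th where "th = arcsin (Im z)"
  have th: "-(pi/2) \<le> th" "th \<le> pi/2" using arcsin_bounded[OF b] th_def by auto
  have "cos th = sqrt (1 - (Im z)^2)" using cos_arcsin[OF b] th_def by simp
  also have "\<dots> = Re z" using z by (simp add: cmod_def real_sqrt_unique)
  finally have "z = cis (2*pi*(th/(2*pi)))"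
    using sin_arcsin[OF b] th_def by (simp add: complex_eq_iff)
  moreover have "th/(2*pi) \<in> {-1/4..1/4}" using th by (auto simp: field_simps)
  ultimately show "z \<in> Lambda1" unfolding Lambda1_def by blast
qed

lemma closed_Lambda1: "closed Lambda1"
  unfolding Lambda1_eq
  by (intro closed_Collect_conj closed_Collect_eq closed_Collect_le continuous_intros)

lemma exists_multiple_cos_neg:
  fixes th :: real and m :: nat
  assumes "m \<ge> 1" "pi/(2*m) < th" "th \<le> pi"
  shows "\<exists>k\<in>{1..m}. cos (k * th) < 0"
proof -
  have "0 < pi/(2*m)" using assms(1) by simp
  then have th_pos: "th > 0" using assms(2) by linarith
  define q where "q = pi/(2*th)"
  have "q > 0" "q < m" using assms(1,2) th_pos by (simp_all add: q_def field_simps)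
  \<comment> \<open>\<open>k\<close> is the first multiple with \<open>k * th > pi/2\<close>; since \<open>th \<le> pi\<close> it stays below \<open>3*pi/2\<close>.\<close>
  define k where "k = nat \<lfloor>q\<rfloor> + 1"
  have k: "real k - 1 \<le> q" "q < real k" using \<open>q > 0\<close> by (simp_all add: k_def) linarith
  have "k \<in> {1..m}" using \<open>q < m\<close> \<open>q > 0\<close> by (simp add: k_def nat_less_iff) linarith
  moreover have "cos (k * th) < 0"
  proof -
    have below: "(real k - 1) * th \<le> pi/2" and above: "pi/2 < k * th"
      using k th_pos by (simp_all add: q_def field_simps)
    have "k * th < 3*pi/2"
    proof (rule ccontr)
      assume "\<not> k * th < 3*pi/2"
      with below assms(3) have "th = pi" "(real k - 1) * th = pi/2" by (auto simp: algebra_simps)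
      then have "real (2*k) = 3" by (simp add: algebra_simps)
      then have "2*k = 3" by linarith
      then show False by presburger
    qed
    then have "0 < cos (k * th - pi)" using above by (intro cos_gt_zero_pi) auto
    then show ?thesis by (simp add: cos_diff)
  qed
  ultimately show ?thesis by blast
qed

lemma norm_diff_one_le_if_powers_in_Lambda1:
  fixes z :: complex and m :: nat
  assumes "m \<ge> 1" and powers: "\<And>k. k \<in> {1..m} \<Longrightarrow> z ^ k \<in> Lambda1"
  shows "cmod (z - 1) \<le> pi / (2*m)"
proof -
  have "cmod z = 1" using powers[of 1] assms(1) by (simp add: Lambda1_eq)
  define th where "th = Arg z"
  have "z \<noteq> 0" using \<open>cmod z = 1\<close> by auto
  then have z: "z = cis th" using cis_Arg[of z] \<open>cmod z = 1\<close> by (simp add: th_def sgn_div_norm)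
  have "\<bar>th\<bar> \<le> pi/(2*m)"
  proof (rule ccontr)
    assume "\<not> ?thesis"
    moreover have "\<bar>th\<bar> \<le> pi" using Arg_bounded[of z] by (auto simp: th_def)
    ultimately obtain k where k: "k \<in> {1..m}" "cos (k * \<bar>th\<bar>) < 0"
      using exists_multiple_cos_neg[OF assms(1)] by force
    have "cos (k * \<bar>th\<bar>) = Re (z ^ k)"
      by (cases "th \<ge> 0") (simp_all add: z cos_n_Re_cis_pow_n[symmetric])
    then show False using powers[OF k(1)] k(2) by (simp add: Lambda1_eq)
  qed
  moreover have "cmod (z - 1) = 2 * \<bar>sin (th/2)\<bar>"
    using dist_exp_i_1[of th] by (simp add: z cis_conv_exp mult.commute)
  moreover have "\<bar>sin (th/2)\<bar> \<le> \<bar>th/2\<bar>" by (rule abs_sin_x_le_abs_x)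
  ultimately show ?thesis by linarith
qed

lemma powers_in_Lambda1_near_one:
  assumes "\<epsilon> > 0"
  obtains m :: nat where
    "\<And>z. (\<And>k. k \<in> {1..m} \<Longrightarrow> z ^ k \<in> Lambda1) \<Longrightarrow> cmod (z - 1) < \<epsilon>"
proof -
  obtain m :: nat where m: "pi/\<epsilon> < m" using reals_Archimedean2 by blast
  then have "m \<ge> 1" using assms by (cases m) (auto simp: field_simps)
  have "pi < \<epsilon> * m" using m assms by (simp add: field_simps)
  also have "\<dots> \<le> \<epsilon> * (2*m)" using assms by simp
  finally have "pi/(2*m) < \<epsilon>" using \<open>m \<ge> 1\<close> by (simp add: field_simps)
  show thesis
  proof (rule that)
    fix z :: complex assume "\<And>k. k \<in> {1..m} \<Longrightarrow> z ^ k \<in> Lambda1"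
    then have "cmod (z - 1) \<le> pi/(2*m)" by (rule norm_diff_one_le_if_powers_in_Lambda1[OF \<open>m \<ge> 1\<close>])
    then show "cmod (z - 1) < \<epsilon>" using \<open>pi/(2*m) < \<epsilon>\<close> by linarith
  qed
qed

section \<open>The compact-open topology and equicontinuity\<close>

lemma topspace_circle_top [simp]: "topspace circle_top = sphere 0 1"
  by (simp add: circle_top_def)

lemma continuous_map_circle_top_iff:
  "continuous_map X circle_top f \<longleftrightarrow> continuous_map X euclidean f \<and> (\<forall>x\<in>topspace X. cmod (f x) = 1)"
  unfolding circle_top_def continuous_map_in_subtopology Pi_iff mem_sphere_0 by simp

lemma continuous_map_mult [continuous_intros]:
  fixes f g :: "'a \<Rightarrow> 'b::real_normed_algebra"
  shows "continuous_map X euclidean f \<Longrightarrow> continuous_map X euclidean g \<Longrightarrow>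
    continuous_map X euclidean (\<lambda>x. f x * g x)"
  by (simp add: continuous_map_atin tendsto_mult)

lemma closedin_Collect_Ball:
  assumes "\<And>i. i \<in> I \<Longrightarrow> closedin X {x \<in> topspace X. P i x}"
  shows "closedin X {x \<in> topspace X. \<forall>i\<in>I. P i x}"
proof -
  have eq: "{x \<in> topspace X. \<forall>i\<in>I. P i x} =
      \<Inter>(insert (topspace X) ((\<lambda>i. {x \<in> topspace X. P i x}) ` I))"
    by auto
  show ?thesis unfolding eq using assms by (intro closedin_Inter) auto
qed

lemma Hausdorff_space_circle_top: "Hausdorff_space circle_top"
  unfolding circle_top_def by (simp add: Hausdorff_space_subtopology)

lemma compact_open_top_subbasic_UNIV:
  "UNIV \<in> {{f. f ` K \<subseteq> U} | K U. compactin X K \<and> openin Y U}"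
proof -
  have "{f. f ` {} \<subseteq> {}} \<in> {{f. f ` K \<subseteq> U} | K U. compactin X K \<and> openin Y U}" by force
  then show ?thesis by simp
qed

lemma topspace_compact_open_top [simp]: "topspace (compact_open_top X Y) = UNIV"
  using compact_open_top_subbasic_UNIV
  unfolding compact_open_top_def topology_generated_by_topspace by blast

lemma openin_compact_open_top_subbasic:
  "compactin X K \<Longrightarrow> openin Y U \<Longrightarrow> openin (compact_open_top X Y) {f. f ` K \<subseteq> U}"
  unfolding compact_open_top_def by (rule topology_generated_by_Basis) blast

lemma compact_open_top_nhd_subbasic:
  assumes "openin (compact_open_top X Y) G" "f \<in> G"
  obtains \<F> where "finite \<F>" "\<F> \<subseteq> {{f. f ` K \<subseteq> U} | K U. compactin X K \<and> openin Y U}"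
    "f \<in> \<Inter>\<F>" "\<Inter>\<F> \<subseteq> G"
proof -
  have "(arbitrary union_of finite' intersection_of
      (\<lambda>V. V \<in> {{f. f ` K \<subseteq> U} | K U. compactin X K \<and> openin Y U})) G"
    using assms(1) openin_topology_generated_by_iff
    unfolding compact_open_top_def generate_topology_on_eq by blast
  then obtain T where "f \<in> T" "T \<subseteq> G" "(finite' intersection_of
      (\<lambda>V. V \<in> {{f. f ` K \<subseteq> U} | K U. compactin X K \<and> openin Y U})) T"
    using assms(2) unfolding union_of_def by blast
  then obtain \<F> where "finite \<F>" "\<F> \<subseteq> {{f. f ` K \<subseteq> U} | K U. compactin X K \<and> openin Y U}" "\<Inter>\<F> = T"
    unfolding intersection_of_def by auto
  with that \<open>f \<in> T\<close> \<open>T \<subseteq> G\<close> show thesis by blast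
qed

lemma Hausdorff_space_compact_open_top_subtopology:
  assumes "Hausdorff_space Y" "S \<subseteq> extensional (topspace X)"
    and "\<And>f. f \<in> S \<Longrightarrow> f ` topspace X \<subseteq> topspace Y"
  shows "Hausdorff_space (subtopology (compact_open_top X Y) S)"
  unfolding Hausdorff_space_def
proof (intro allI impI)
  fix f g assume "f \<in> topspace (subtopology (compact_open_top X Y) S) \<and>
    g \<in> topspace (subtopology (compact_open_top X Y) S) \<and> f \<noteq> g"
  then have fg: "f \<in> S" "g \<in> S" "f \<noteq> g" by auto
  then obtain x where x: "x \<in> topspace X" "f x \<noteq> g x"
    using assms(2) extensionalityI[of f "topspace X" g] by blast
  moreover have "f x \<in> topspace Y" "g x \<in> topspace Y" using assms(3) fg(1,2) x(1) by blast+
  ultimately obtain U V where UV: "openin Y U" "openin Y V" "f x \<in> U" "g x \<in> V" "disjnt U V"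
    using assms(1) unfolding Hausdorff_space_def by metis
  have "openin (subtopology (compact_open_top X Y) S) ({h. h ` {x} \<subseteq> W} \<inter> S)" if "openin Y W" for W
    using x(1) that by (intro openin_subtopology_Int openin_compact_open_top_subbasic) simp_all
  moreover have "disjnt ({h. h ` {x} \<subseteq> U} \<inter> S) ({h. h ` {x} \<subseteq> V} \<inter> S)"
    using UV(5) by (auto simp: disjnt_def)
  ultimately show "\<exists>U V. openin (subtopology (compact_open_top X Y) S) U \<and>
      openin (subtopology (compact_open_top X Y) S) V \<and> f \<in> U \<and> g \<in> V \<and> disjnt U V"
    using UV(1-4) fg(1,2) by blast
qed

lemma compact_open_top_nhd_uniform:
  fixes f0 :: "'a \<Rightarrow> 'b::metric_space"
  assumes "compactin X L" "continuous_map X (subtopology euclidean S) f0" "\<delta> > 0"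
  obtains G where "openin (compact_open_top X (subtopology euclidean S)) G" "f0 \<in> G"
    "\<And>f y. f \<in> G \<Longrightarrow> y \<in> L \<Longrightarrow> dist (f y) (f0 y) < \<delta>"
proof -
  have f0: "continuous_map X euclidean f0" "f0 \<in> topspace X \<rightarrow> S"
    using assms(2) by (simp_all add: continuous_map_in_subtopology)
  have "compact (f0 ` L)" using image_compactin[OF assms(1) f0(1)] by simp
  moreover have "f0 ` L \<subseteq> (\<Union>c\<in>f0 ` L. ball c (\<delta>/3))" using assms(3) by force
  ultimately obtain Cs where Cs: "finite Cs" "f0 ` L \<subseteq> (\<Union>c\<in>Cs. ball c (\<delta>/3))"
    by (metis compactE_image open_ball)
  \<comment> \<open>\<open>f0\<close> maps each piece \<open>Lc c\<close> into \<open>Uc c\<close>; any \<open>f\<close> doing the same is \<open>\<delta>\<close>-close to \<open>f0\<close> on \<open>L\<close>.\<close>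
  define Lc where "Lc c = {y \<in> topspace X. f0 y \<in> cball c (\<delta>/3)} \<inter> L" for c
  define Uc where "Uc c = S \<inter> ball c (2*\<delta>/3)" for c
  define G where "G = UNIV \<inter> \<Inter>((\<lambda>c. {f. f ` Lc c \<subseteq> Uc c}) ` Cs)"
  show thesis
  proof (rule that)
    have "compactin X (Lc c)" for c
      unfolding Lc_def by (intro closed_Int_compactin closedin_continuous_map_preimage[OF f0(1)] assms(1)) simp
    moreover have "openin (subtopology euclidean S) (Uc c)" for c
      unfolding Uc_def by (intro openin_subtopology_Int2) simp
    ultimately show "openin (compact_open_top X (subtopology euclidean S)) G"
      unfolding G_def using Cs(1) openin_topspace[of "compact_open_top X (subtopology euclidean S)"]
      by (intro openin_Int_Inter) (auto intro: openin_compact_open_top_subbasic)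
    have "f0 ` Lc c \<subseteq> Uc c" for c
      using f0(2) assms(3) by (auto simp: Lc_def Uc_def compactin_subset_topspace[OF assms(1)] dist_commute)
    then show "f0 \<in> G" unfolding G_def by blast
  next
    fix f y assume f: "f \<in> G" and y: "y \<in> L"
    obtain c where c: "c \<in> Cs" "dist c (f0 y) < \<delta>/3" using Cs(2) y by auto
    have "y \<in> Lc c" using c y compactin_subset_topspace[OF assms(1)] by (auto simp: Lc_def)
    then have "f y \<in> Uc c" using f c(1) unfolding G_def by blast
    then have "dist c (f y) < 2*\<delta>/3" by (simp add: Uc_def)
    then show "dist (f y) (f0 y) < \<delta>" using c(2) dist_triangle[of "f y" "f0 y" c] by (simp add: dist_commute)
  qed
qed

definition equicontinuous :: "'a topology \<Rightarrow> ('a \<Rightarrow> 'b::metric_space) set \<Rightarrow> bool" where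
  "equicontinuous X F \<longleftrightarrow> (\<forall>x\<in>topspace X. \<forall>\<epsilon>>0. \<exists>N. openin X N \<and> x \<in> N \<and>
     (\<forall>f\<in>F. \<forall>y\<in>N. dist (f y) (f x) < \<epsilon>))"

lemma continuous_map_if_equicontinuous:
  assumes "equicontinuous X F" "f \<in> F"
  shows "continuous_map X euclidean f"
proof -
  have "\<exists>U. openin X U \<and> x \<in> U \<and> (\<forall>y\<in>U. dist (f y) (f x) < \<epsilon>)"
    if "x \<in> topspace X" "\<epsilon> > 0" for x \<epsilon>
  proof -
    have "\<exists>N. openin X N \<and> x \<in> N \<and> (\<forall>g\<in>F. \<forall>y\<in>N. dist (g y) (g x) < \<epsilon>)"
      using assms(1) that unfolding equicontinuous_def by simp
    then show ?thesis using assms(2) by fast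
  qed
  then show ?thesis unfolding Met_TC.continuous_map_to_metric[simplified] by (simp add: dist_commute)
qed

lemma equicontinuous_finite_net:
  assumes "equicontinuous X F" "compactin X D" "\<epsilon> > 0"
  obtains D' where "finite D'" "D' \<subseteq> D"
    "\<And>f g y. f \<in> F \<Longrightarrow> g \<in> F \<Longrightarrow> (\<And>\<kappa>. \<kappa> \<in> D' \<Longrightarrow> dist (f \<kappa>) (g \<kappa>) < \<epsilon>) \<Longrightarrow> y \<in> D \<Longrightarrow>
      dist (f y) (g y) < 3 * \<epsilon>"
proof -
  have "\<forall>\<kappa>\<in>D. \<exists>N. openin X N \<and> \<kappa> \<in> N \<and> (\<forall>f\<in>F. \<forall>y\<in>N. dist (f y) (f \<kappa>) < \<epsilon>)"
  proof
    fix \<kappa> assume "\<kappa> \<in> D"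
    then have "\<kappa> \<in> topspace X" using compactin_subset_topspace[OF assms(2)] by blast
    then show "\<exists>N. openin X N \<and> \<kappa> \<in> N \<and> (\<forall>f\<in>F. \<forall>y\<in>N. dist (f y) (f \<kappa>) < \<epsilon>)"
      using assms(1,3) unfolding equicontinuous_def by simp
  qed
  then obtain N where N: "\<forall>\<kappa>\<in>D. openin X (N \<kappa>) \<and> \<kappa> \<in> N \<kappa> \<and> (\<forall>f\<in>F. \<forall>y\<in>N \<kappa>. dist (f y) (f \<kappa>) < \<epsilon>)"
    by (rule bchoice[THEN exE]) blast
  have cover: "(\<forall>B\<in>N ` D. openin X B) \<and> D \<subseteq> \<Union>(N ` D)" using N by blast
  have "\<forall>\<U>. (\<forall>B\<in>\<U>. openin X B) \<and> D \<subseteq> \<Union>\<U> \<longrightarrow> (\<exists>\<F>. finite \<F> \<and> \<F> \<subseteq> \<U> \<and> D \<subseteq> \<Union>\<F>)"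
    using assms(2) unfolding compactin_def by (rule conjunct2)
  from this[THEN spec[of _ "N ` D"], THEN mp, OF cover]
  have "\<exists>\<F>. finite \<F> \<and> \<F> \<subseteq> N ` D \<and> D \<subseteq> \<Union>\<F>" .
  then obtain D' where D': "finite D'" "D' \<subseteq> D" "D \<subseteq> (\<Union>\<kappa>\<in>D'. N \<kappa>)"
    by (metis finite_subset_image)
  show thesis
  proof (rule that[OF D'(1,2)])
    fix f g y assume fg: "f \<in> F" "g \<in> F" and close: "\<And>\<kappa>. \<kappa> \<in> D' \<Longrightarrow> dist (f \<kappa>) (g \<kappa>) < \<epsilon>"
      and "y \<in> D"
    then obtain \<kappa> where \<kappa>: "\<kappa> \<in> D'" "y \<in> N \<kappa>" using D'(3) by blast
    then have "dist (f y) (f \<kappa>) < \<epsilon>" "dist (g y) (g \<kappa>) < \<epsilon>" using N D'(2) fg by blast+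
    moreover have "dist (f \<kappa>) (g \<kappa>) < \<epsilon>" using close \<kappa>(1) .
    ultimately show "dist (f y) (g y) < 3 * \<epsilon>"
      using dist_triangle[of "f y" "g y" "f \<kappa>"] dist_triangle[of "f \<kappa>" "g y" "g \<kappa>"]
      by (simp add: dist_commute)
  qed
qed

lemma equicontinuous_pointwise_nhd:
  fixes X :: "'a topology" and S :: "'b::heine_borel set" and F :: "('a \<Rightarrow> 'b) set"
  defines "P \<equiv> product_topology (\<lambda>_. subtopology euclidean S) (topspace X)"
  assumes equicont: "equicontinuous X F" and F: "F \<subseteq> topspace P"
    and D: "compactin X D" and "open W" and f0: "f0 \<in> F" "f0 ` D \<subseteq> W"
  obtains T where "openin P T" "f0 \<in> T" "\<And>f y. f \<in> T \<Longrightarrow> f \<in> F \<Longrightarrow> y \<in> D \<Longrightarrow> f y \<in> W"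
proof -
  have "compact (f0 ` D)"
    using image_compactin[OF D continuous_map_if_equicontinuous[OF equicont f0(1)]] by simp
  moreover have "f0 ` D \<inter> - W = {}" using f0(2) by auto
  ultimately obtain \<epsilon> where \<epsilon>: "\<epsilon> > 0" "\<And>x y. x \<in> f0 ` D \<Longrightarrow> y \<in> - W \<Longrightarrow> \<epsilon> \<le> dist x y"
    using separate_compact_closed[of "f0 ` D" "- W"] \<open>open W\<close> by (metis closed_Compl)
  obtain D' where D': "finite D'" "D' \<subseteq> D"
    "\<And>f g y. f \<in> F \<Longrightarrow> g \<in> F \<Longrightarrow> (\<And>\<kappa>. \<kappa> \<in> D' \<Longrightarrow> dist (f \<kappa>) (g \<kappa>) < \<epsilon>/3) \<Longrightarrow> y \<in> D \<Longrightarrow>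
      dist (f y) (g y) < 3 * (\<epsilon>/3)"
    using equicontinuous_finite_net[OF equicont D, of "\<epsilon>/3"] \<epsilon>(1) by auto
  define T where "T = topspace P \<inter> \<Inter>((\<lambda>\<kappa>. {f \<in> topspace P. f \<kappa> \<in> ball (f0 \<kappa>) (\<epsilon>/3)}) ` D')"
  show thesis
  proof (rule that)
    have "openin P {f \<in> topspace P. f \<kappa> \<in> ball (f0 \<kappa>) (\<epsilon>/3)}" if "\<kappa> \<in> D'" for \<kappa>
    proof -
      have "\<kappa> \<in> topspace X" using that D'(2) compactin_subset_topspace[OF D] by blast
      then have "continuous_map P euclidean (\<lambda>f. f \<kappa>)"
        using continuous_map_product_projection[of \<kappa> "topspace X" "\<lambda>_. subtopology euclidean S"]
        unfolding P_def by (simp add: continuous_map_in_subtopology)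
      then show ?thesis by (rule openin_continuous_map_preimage) simp
    qed
    then show "openin P T" unfolding T_def using D'(1) by (intro openin_Int_Inter) auto
    show "f0 \<in> T" using f0(1) F \<epsilon>(1) unfolding T_def by auto
  next
    fix f y assume f: "f \<in> T" "f \<in> F" and y: "y \<in> D"
    have "dist (f \<kappa>) (f0 \<kappa>) < \<epsilon>/3" if "\<kappa> \<in> D'" for \<kappa>
      using f(1) that unfolding T_def by (auto simp: dist_commute)
    then have "dist (f y) (f0 y) < \<epsilon>" using D'(3)[OF f(2) f0(1) _ y] by simp
    then show "f y \<in> W" using \<epsilon>(2)[of "f0 y" "f y"] y by (fastforce simp: dist_commute)
  qed
qed

lemma continuous_map_product_topology_to_compact_open_top:
  fixes X :: "'a topology" and S :: "'b::heine_borel set" and F :: "('a \<Rightarrow> 'b) set"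
  defines "P \<equiv> product_topology (\<lambda>_. subtopology euclidean S) (topspace X)"
  assumes equicont: "equicontinuous X F" and F: "F \<subseteq> topspace P"
  shows "continuous_map (subtopology P F) (compact_open_top X (subtopology euclidean S)) id"
  unfolding compact_open_top_def
proof (rule continuous_on_generated_topo)
  show "id ` topspace (subtopology P F) \<subseteq>
      \<Union>{{f. f ` K \<subseteq> U} | K U. compactin X K \<and> openin (subtopology euclidean S) U}"
    using compact_open_top_subbasic_UNIV by blast
next
  fix U assume "U \<in> {{f. f ` K \<subseteq> U} | K U. compactin X K \<and> openin (subtopology euclidean S) U}"
  then obtain D W where U: "U = {f. f ` D \<subseteq> W}" "compactin X D" "openin (subtopology euclidean S) W"
    by blast
  obtain W' where W': "open W'" "W = S \<inter> W'" using U(3) by (auto simp: openin_open)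
  have "id -` U \<inter> topspace (subtopology P F) = {f \<in> F. f ` D \<subseteq> W}" using F U(1) by auto
  moreover have "\<exists>T. openin (subtopology P F) T \<and> f0 \<in> T \<and> T \<subseteq> {f \<in> F. f ` D \<subseteq> W}"
    if f0: "f0 \<in> F" "f0 ` D \<subseteq> W" for f0
  proof -
    have "f0 ` D \<subseteq> W'" using f0(2) W'(2) by blast
    then obtain T where T: "openin P T" "f0 \<in> T" "\<And>f y. f \<in> T \<Longrightarrow> f \<in> F \<Longrightarrow> y \<in> D \<Longrightarrow> f y \<in> W'"
      unfolding P_def by (rule equicontinuous_pointwise_nhd[OF equicont F[unfolded P_def] U(2) W'(1) f0(1)]) blast
    have "f y \<in> S" if "f \<in> F" "y \<in> D" for f y
      using that F compactin_subset_topspace[OF U(2)] by (auto simp: P_def PiE_iff)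
    then have "T \<inter> F \<subseteq> {f \<in> F. f ` D \<subseteq> W}" using T(3) W'(2) by blast
    moreover have "openin (subtopology P F) (T \<inter> F)" using T(1) by (rule openin_subtopology_Int)
    ultimately show ?thesis using T(2) f0(1) by blast
  qed
  ultimately show "openin (subtopology P F) (id -` U \<inter> topspace (subtopology P F))"
    by (subst openin_subopen) auto
qed

lemma compactin_compact_open_top_if_equicontinuous:
  fixes F :: "('a \<Rightarrow> 'b::heine_borel) set"
  assumes "equicontinuous X F" "compact S"
    and "closedin (product_topology (\<lambda>_. subtopology euclidean S) (topspace X)) F"
  shows "compactin (compact_open_top X (subtopology euclidean S)) F"
proof -
  have "compact_space (product_topology (\<lambda>_. subtopology euclidean S) (topspace X))"
    using assms(2) by (simp add: compact_space_product_topology compact_space_subtopology)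
  then have "compactin (subtopology (product_topology (\<lambda>_. subtopology euclidean S) (topspace X)) F) F"
    using assms(3) by (simp add: closedin_compact_space compactin_subtopology)
  from image_compactin[OF this continuous_map_product_topology_to_compact_open_top[OF assms(1)]]
  show ?thesis using closedin_subset[OF assms(3)] by simp
qed

section \<open>Characters and polars\<close>

lemma topspace_char_top [simp]: "topspace (char_top X m) = chars X m"
  by (simp add: char_top_def)

lemma norm_char: "\<gamma> \<in> chars X m \<Longrightarrow> x \<in> topspace X \<Longrightarrow> cmod (\<gamma> x) = 1"
  unfolding chars_def continuous_map_circle_top_iff by auto

lemma char_idempotent:
  assumes "\<gamma> \<in> chars X m" "e \<in> topspace X" "m e e = e"
  shows "\<gamma> e = 1"
proof -
  have "\<gamma> (m e e) = \<gamma> e * \<gamma> e" using assms(1,2) unfolding chars_def by blast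
  then have "\<gamma> e = \<gamma> e * \<gamma> e" using assms(3) by simp
  moreover have "\<gamma> e \<noteq> 0" using norm_char[OF assms(1,2)] by auto
  ultimately show ?thesis by simp
qed

lemma eval_map_apply: "\<gamma> \<in> chars X m \<Longrightarrow> eval_map X m b \<gamma> = \<gamma> b"
  unfolding eval_map_def by simp

lemma Hausdorff_space_char_top: "Hausdorff_space (char_top X m)"
  unfolding char_top_def
  by (rule Hausdorff_space_compact_open_top_subtopology[OF Hausdorff_space_circle_top])
    (auto simp: chars_def continuous_map_def)

abbreviation dual_chars :: "('a::topological_ab_group_add \<Rightarrow> complex) set" where
  "dual_chars \<equiv> chars euclidean (+)"

abbreviation dual_top :: "('a::topological_ab_group_add \<Rightarrow> complex) topology" where
  "dual_top \<equiv> char_top euclidean (+)"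

abbreviation dual_polar :: "'a::topological_ab_group_add set \<Rightarrow> ('a \<Rightarrow> complex) set" where
  "dual_polar K \<equiv> polar_right euclidean (+) K"

abbreviation bidual_chars :: "(('a::topological_ab_group_add \<Rightarrow> complex) \<Rightarrow> complex) set" where
  "bidual_chars \<equiv> chars dual_top (char_mult euclidean)"

abbreviation bidual_top :: "(('a::topological_ab_group_add \<Rightarrow> complex) \<Rightarrow> complex) topology" where
  "bidual_top \<equiv> char_top dual_top (char_mult euclidean)"

abbreviation bipolar :: "'a::topological_ab_group_add set \<Rightarrow> (('a \<Rightarrow> complex) \<Rightarrow> complex) set" where
  "bipolar K \<equiv> polar_right dual_top (char_mult euclidean) (dual_polar K)"

lemma char_mult_euclidean [simp]: "char_mult euclidean \<phi> \<psi> = (\<lambda>x. \<phi> x * \<psi> x)"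
  by (simp add: char_mult_def restrict_UNIV)

lemma dual_chars_iff:
  "\<gamma> \<in> dual_chars \<longleftrightarrow>
     continuous_on UNIV \<gamma> \<and> (\<forall>x. cmod (\<gamma> x) = 1) \<and> (\<forall>x y. \<gamma> (x + y) = \<gamma> x * \<gamma> y)"
  unfolding chars_def continuous_map_circle_top_iff by auto

lemma dual_charsD:
  assumes "\<gamma> \<in> dual_chars"
  shows "continuous_on UNIV \<gamma>" "cmod (\<gamma> x) = 1" "\<gamma> (x + y) = \<gamma> x * \<gamma> y"
  using assms unfolding dual_chars_iff by auto

lemma dual_charsI:
  assumes "continuous_on UNIV \<gamma>" "\<And>x. cmod (\<gamma> x) = 1" "\<And>x y. \<gamma> (x + y) = \<gamma> x * \<gamma> y"
  shows "\<gamma> \<in> dual_chars"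
  using assms unfolding dual_chars_iff by auto

lemma dual_char_zero: "\<gamma> \<in> dual_chars \<Longrightarrow> \<gamma> 0 = 1"
  using char_idempotent[of \<gamma> euclidean "(+)" 0] by simp

lemma dual_chars_one: "(\<lambda>_. 1) \<in> dual_chars"
  by (rule dual_charsI) auto

lemma dual_chars_mult:
  assumes "\<phi> \<in> dual_chars" "\<psi> \<in> dual_chars"
  shows "(\<lambda>x. \<phi> x * \<psi> x) \<in> dual_chars"
  using dual_charsD[OF assms(1)] dual_charsD[OF assms(2)]
  by (intro dual_charsI continuous_on_mult) (auto simp: norm_mult)

lemma dual_chars_cnj: "\<phi> \<in> dual_chars \<Longrightarrow> (\<lambda>x. cnj (\<phi> x)) \<in> dual_chars"
  using dual_charsD[of \<phi>] by (intro dual_charsI continuous_on_cnj) auto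

lemma dual_chars_power: "\<phi> \<in> dual_chars \<Longrightarrow> (\<lambda>x. \<phi> x ^ k) \<in> dual_chars"
  using dual_charsD[of \<phi>]
  by (intro dual_charsI continuous_on_power) (auto simp: norm_power power_mult_distrib)

lemma cnj_mult_self_dual_char: "\<phi> \<in> dual_chars \<Longrightarrow> cnj (\<phi> x) * \<phi> x = 1"
  using complex_norm_square[of "\<phi> x"] dual_charsD(2)[of \<phi> x] by (simp add: mult.commute)

primrec nat_smult :: "nat \<Rightarrow> 'a::monoid_add \<Rightarrow> 'a" where
  "nat_smult 0 x = 0"
| "nat_smult (Suc k) x = x + nat_smult k x"

lemma continuous_on_nat_smult:
  "continuous_on UNIV (nat_smult k :: 'a::topological_monoid_add \<Rightarrow> 'a)"
  by (induct k) (simp_all add: continuous_on_add)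

lemma dual_char_nat_smult: "\<gamma> \<in> dual_chars \<Longrightarrow> \<gamma> (nat_smult k x) = \<gamma> x ^ k"
  by (induct k) (simp_all add: dual_char_zero dual_charsD(3))

definition multiples_upto :: "'a::monoid_add set \<Rightarrow> nat \<Rightarrow> 'a set" where
  "multiples_upto K m = (\<Union>k\<in>{1..m}. nat_smult k ` K)"

lemma compact_multiples_upto:
  "compact (K :: 'a::topological_ab_group_add set) \<Longrightarrow> compact (multiples_upto K m)"
  unfolding multiples_upto_def
  by (intro compact_UN finite_atLeastAtMost compact_continuous_image
      continuous_on_subset[OF continuous_on_nat_smult]) auto

lemma polar_right_antimono: "K \<subseteq> K' \<Longrightarrow> polar_right X m K' \<subseteq> polar_right X m K"
  unfolding polar_right_def by auto

lemma power_in_dual_polar: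
  assumes "\<phi> \<in> dual_polar (multiples_upto K m)" "k \<in> {1..m}"
  shows "(\<lambda>x. \<phi> x ^ k) \<in> dual_polar K"
proof -
  have \<phi>: "\<phi> \<in> dual_chars" using assms(1) by (simp add: polar_right_def)
  have "\<phi> (nat_smult k x) \<in> Lambda1" if "x \<in> K" for x
    using assms that unfolding polar_right_def multiples_upto_def by blast
  then show ?thesis
    using dual_chars_power[OF \<phi>] by (auto simp: polar_right_def dual_char_nat_smult[OF \<phi>])
qed

lemma dual_polar_multiples_near_one:
  assumes "\<epsilon> > 0"
  obtains m where
    "\<And>K \<phi> x. \<phi> \<in> dual_polar (multiples_upto K m) \<Longrightarrow> x \<in> K \<Longrightarrow> cmod (\<phi> x - 1) < \<epsilon>"
proof -
  obtain m where m: "\<And>z. (\<And>k. k \<in> {1..m} \<Longrightarrow> z ^ k \<in> Lambda1) \<Longrightarrow> cmod (z - 1) < \<epsilon>"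
    using powers_in_Lambda1_near_one[OF assms] by blast
  show thesis
  proof (rule that)
    fix K and \<phi> :: "'a \<Rightarrow> complex" and x
    assume "\<phi> \<in> dual_polar (multiples_upto K m)" "x \<in> K"
    then have "\<phi> x ^ k \<in> Lambda1" if "k \<in> {1..m}" for k
      using power_in_dual_polar[OF _ that] by (auto simp: polar_right_def)
    then show "cmod (\<phi> x - 1) < \<epsilon>" by (rule m)
  qed
qed

lemma dual_polar_subset_subbasic:
  fixes K :: "'a::topological_ab_group_add set"
  assumes "compact K" "openin circle_top U" "(\<lambda>_. 1) ` K \<subseteq> U"
  obtains K' :: "'a set" where "compact K'" "dual_polar K' \<subseteq> {f. f ` K \<subseteq> U}"
proof (cases "K = {}")
  case True
  then show thesis using that[of "{}"] by auto
next
  case False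
  then have "1 \<in> U" using assms(3) by auto
  obtain W where W: "open W" "U = sphere 0 1 \<inter> W"
    using assms(2) unfolding circle_top_def openin_open by blast
  obtain \<epsilon> where \<epsilon>: "\<epsilon> > 0" "ball 1 \<epsilon> \<subseteq> W" using W \<open>1 \<in> U\<close> open_contains_ball by blast
  obtain m where m: "\<And>(K :: 'a set) \<phi> x. \<phi> \<in> dual_polar (multiples_upto K m) \<Longrightarrow> x \<in> K \<Longrightarrow> cmod (\<phi> x - 1) < \<epsilon>"
    using dual_polar_multiples_near_one[OF \<epsilon>(1)] by blast
  show thesis
  proof (rule that)
    show "compact (multiples_upto K m)" by (rule compact_multiples_upto[OF assms(1)])
    show "dual_polar (multiples_upto K m) \<subseteq> {f. f ` K \<subseteq> U}"
    proof -
      have "\<phi> x \<in> U" if \<phi>: "\<phi> \<in> dual_polar (multiples_upto K m)" and x: "x \<in> K" for \<phi> x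
      proof -
        have "cmod (\<phi> x - 1) < \<epsilon>" using m[OF \<phi> x] .
        then have "\<phi> x \<in> ball 1 \<epsilon>" by (simp add: dist_norm norm_minus_commute)
        moreover have "cmod (\<phi> x) = 1" using \<phi> by (simp add: polar_right_def dual_charsD(2))
        ultimately show "\<phi> x \<in> U" using W(2) \<epsilon>(2) by auto
      qed
      then show ?thesis by blast
    qed
  qed
qed

lemma dual_polar_subset_nhd:
  assumes "openin dual_top N" "(\<lambda>_. 1) \<in> N"
  obtains K :: "'a::topological_ab_group_add set" where "compact K" "dual_polar K \<subseteq> N"
proof -
  obtain G where G: "openin (compact_open_top euclidean circle_top) G" "N = G \<inter> dual_chars"
    using assms(1) unfolding char_top_def openin_subtopology by blast
  have "(\<lambda>_. 1) \<in> G" using assms(2) G(2) by blast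
  then obtain \<F> where \<F>: "finite \<F>"
    "\<F> \<subseteq> {{f. f ` K \<subseteq> U} | K U. compactin euclidean K \<and> openin circle_top U}"
    "(\<lambda>_. 1) \<in> \<Inter>\<F>" "\<Inter>\<F> \<subseteq> G"
    by (rule compact_open_top_nhd_subbasic[OF G(1)])
  have "\<forall>V\<in>\<F>. \<exists>K'::'a set. compact K' \<and> dual_polar K' \<subseteq> V"
  proof
    fix V assume "V \<in> \<F>"
    then obtain K U where KU: "V = {f. f ` K \<subseteq> U}" "compact K" "openin circle_top U"
      using \<F>(2) by auto
    moreover have "(\<lambda>_. 1) ` K \<subseteq> U" using \<F>(3) \<open>V \<in> \<F>\<close> KU(1) by blast
    ultimately show "\<exists>K'. compact K' \<and> dual_polar K' \<subseteq> V"
      using dual_polar_subset_subbasic[of K U] by blast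
  qed
  then obtain Kf where Kf: "\<forall>V\<in>\<F>. compact (Kf V) \<and> dual_polar (Kf V) \<subseteq> V"
    by (rule bchoice[THEN exE]) blast
  show thesis
  proof (rule that)
    show "compact (\<Union>V\<in>\<F>. Kf V)" using \<F>(1) Kf by (intro compact_UN) auto
    have "dual_polar (\<Union>V\<in>\<F>. Kf V) \<subseteq> V" if "V \<in> \<F>" for V
      using that Kf polar_right_antimono[of "Kf V" "\<Union>V\<in>\<F>. Kf V"] by blast
    moreover have "dual_polar (\<Union>V\<in>\<F>. Kf V) \<subseteq> dual_chars" by (auto simp: polar_right_def)
    ultimately show "dual_polar (\<Union>V\<in>\<F>. Kf V) \<subseteq> N" using \<F>(4) G(2) by blast
  qed
qed

section \<open>Compactness of bipolars\<close>

text \<open>The bipolar of \<open>K\<close> with the continuity of its elements dropped.\<close>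
definition bipolar_hom :: "'a::topological_ab_group_add set \<Rightarrow> (('a \<Rightarrow> complex) \<Rightarrow> complex) set" where
  "bipolar_hom K = {\<omega> \<in> (\<Pi>\<^sub>E \<phi>\<in>dual_chars. sphere 0 1).
     (\<forall>\<phi>\<in>dual_chars. \<forall>\<psi>\<in>dual_chars. \<omega> (\<lambda>x. \<phi> x * \<psi> x) = \<omega> \<phi> * \<omega> \<psi>) \<and> \<omega> ` dual_polar K \<subseteq> Lambda1}"

lemma norm_bipolar_hom: "\<omega> \<in> bipolar_hom K \<Longrightarrow> \<phi> \<in> dual_chars \<Longrightarrow> cmod (\<omega> \<phi>) = 1"
  unfolding bipolar_hom_def by auto

lemma bipolar_hom_mult:
  "\<omega> \<in> bipolar_hom K \<Longrightarrow> \<phi> \<in> dual_chars \<Longrightarrow> \<psi> \<in> dual_chars \<Longrightarrow> \<omega> (\<lambda>x. \<phi> x * \<psi> x) = \<omega> \<phi> * \<omega> \<psi>"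
  unfolding bipolar_hom_def by blast

lemma bipolar_hom_Lambda1: "\<omega> \<in> bipolar_hom K \<Longrightarrow> \<phi> \<in> dual_polar K \<Longrightarrow> \<omega> \<phi> \<in> Lambda1"
  unfolding bipolar_hom_def by blast

lemma bipolar_hom_power:
  assumes "\<omega> \<in> bipolar_hom K" "\<psi> \<in> dual_chars"
  shows "\<omega> (\<lambda>x. \<psi> x ^ k) = \<omega> \<psi> ^ k"
proof (induct k)
  case 0
  have "\<omega> (\<lambda>_. 1) = \<omega> (\<lambda>_. 1) * \<omega> (\<lambda>_. 1)"
    using bipolar_hom_mult[OF assms(1) dual_chars_one dual_chars_one] by simp
  moreover have "\<omega> (\<lambda>_. 1) \<noteq> 0" using norm_bipolar_hom[OF assms(1) dual_chars_one] by auto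
  ultimately show ?case by simp
next
  case (Suc k)
  then show ?case using bipolar_hom_mult[OF assms dual_chars_power[OF assms(2)]] by simp
qed

lemma closedin_bipolar_hom:
  "closedin (product_topology (\<lambda>_. circle_top) dual_chars) (bipolar_hom K)"
proof -
  let ?P = "product_topology (\<lambda>_. circle_top) (dual_chars :: ('a \<Rightarrow> complex) set)"
  have eval: "continuous_map ?P euclidean (\<lambda>\<omega>. \<omega> \<phi>)" if "\<phi> \<in> dual_chars" for \<phi>
    using continuous_map_product_projection[OF that, of "\<lambda>_. circle_top"]
    by (simp add: continuous_map_circle_top_iff)
  have eq: "bipolar_hom K =
      {\<omega> \<in> topspace ?P. \<forall>p\<in>dual_chars \<times> dual_chars. \<omega> (\<lambda>x. fst p x * snd p x) = \<omega> (fst p) * \<omega> (snd p)} \<inter>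
      {\<omega> \<in> topspace ?P. \<forall>\<phi>\<in>dual_polar K. \<omega> \<phi> \<in> Lambda1}"
    unfolding bipolar_hom_def by auto
  have "closedin ?P {\<omega> \<in> topspace ?P. \<omega> (\<lambda>x. fst p x * snd p x) = \<omega> (fst p) * \<omega> (snd p)}"
    if "p \<in> dual_chars \<times> dual_chars" for p
    using that by (intro closedin_continuous_maps_eq[OF Hausdorff_space_euclidean] eval
        continuous_map_mult dual_chars_mult) auto
  moreover have "closedin ?P {\<omega> \<in> topspace ?P. \<omega> \<phi> \<in> Lambda1}" if "\<phi> \<in> dual_polar K" for \<phi>
    using that closed_Lambda1
    by (intro closedin_continuous_map_preimage[OF eval]) (auto simp: polar_right_def)
  ultimately show ?thesis unfolding eq by (intro closedin_Int closedin_Collect_Ball)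
qed

lemma quotient_in_dual_polar:
  assumes \<phi>: "\<phi> \<in> dual_chars" and \<phi>0: "\<phi>0 \<in> dual_chars"
    and close: "\<And>y. y \<in> L \<Longrightarrow> dist (\<phi> y) (\<phi>0 y) < 1"
  shows "(\<lambda>x. \<phi> x * cnj (\<phi>0 x)) \<in> dual_polar L"
proof -
  have \<psi>: "(\<lambda>x. \<phi> x * cnj (\<phi>0 x)) \<in> dual_chars" using \<phi> \<phi>0 by (intro dual_chars_mult dual_chars_cnj)
  have "\<phi> y * cnj (\<phi>0 y) \<in> Lambda1" if "y \<in> L" for y
  proof -
    have "\<phi> y * cnj (\<phi>0 y) - 1 = (\<phi> y - \<phi>0 y) * cnj (\<phi>0 y)"
      using cnj_mult_self_dual_char[OF \<phi>0, of y] by (simp add: algebra_simps)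
    then have "cmod (\<phi> y * cnj (\<phi>0 y) - 1) < 1"
      using close[OF that] dual_charsD(2)[OF \<phi>0] by (simp add: norm_mult dist_norm)
    then have "0 \<le> Re (\<phi> y * cnj (\<phi>0 y))" using abs_Re_le_cmod[of "\<phi> y * cnj (\<phi>0 y) - 1"] by simp
    then show ?thesis using dual_charsD(2)[OF \<psi>] by (simp add: Lambda1_eq)
  qed
  then show ?thesis using \<psi> by (auto simp: polar_right_def)
qed

lemma bipolar_hom_multiples_near_one:
  assumes "\<eta> > 0"
  obtains m where "\<And>K \<omega> \<psi>. \<omega> \<in> bipolar_hom K \<Longrightarrow> \<psi> \<in> dual_polar (multiples_upto K m) \<Longrightarrow>
    cmod (\<omega> \<psi> - 1) < \<eta>"
proof -
  obtain m where m: "\<And>z. (\<And>k. k \<in> {1..m} \<Longrightarrow> z ^ k \<in> Lambda1) \<Longrightarrow> cmod (z - 1) < \<eta>"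
    using powers_in_Lambda1_near_one[OF assms] by blast
  show thesis
  proof (rule that)
    fix K and \<omega> :: "('a \<Rightarrow> complex) \<Rightarrow> complex" and \<psi>
    assume \<omega>: "\<omega> \<in> bipolar_hom K" and \<psi>: "\<psi> \<in> dual_polar (multiples_upto K m)"
    have "\<omega> (\<lambda>x. \<psi> x ^ k) \<in> Lambda1" if "k \<in> {1..m}" for k
      by (rule bipolar_hom_Lambda1[OF \<omega> power_in_dual_polar[OF \<psi> that]])
    then have "\<omega> \<psi> ^ k \<in> Lambda1" if "k \<in> {1..m}" for k
      using that \<psi> by (simp add: bipolar_hom_power[OF \<omega>] polar_right_def)
    then show "cmod (\<omega> \<psi> - 1) < \<eta>" by (rule m)
  qed
qed

lemma equicontinuous_bipolar_hom:
  assumes "compact K"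
  shows "equicontinuous dual_top (bipolar_hom K)"
  unfolding equicontinuous_def
proof (intro ballI allI impI)
  fix \<phi>0 :: "'a \<Rightarrow> complex" and \<eta> :: real
  assume "\<phi>0 \<in> topspace dual_top" "\<eta> > 0"
  then have \<phi>0: "\<phi>0 \<in> dual_chars" by simp
  obtain m where m: "\<And>(K :: 'a set) \<omega> \<psi>. \<omega> \<in> bipolar_hom K \<Longrightarrow>
      \<psi> \<in> dual_polar (multiples_upto K m) \<Longrightarrow> cmod (\<omega> \<psi> - 1) < \<eta>"
    by (rule bipolar_hom_multiples_near_one[OF \<open>\<eta> > 0\<close>]) blast
  have cont: "continuous_map euclidean (subtopology euclidean (sphere 0 1)) \<phi>0"
    using \<phi>0 unfolding chars_def circle_top_def by blast
  have L: "compactin euclidean (multiples_upto K m)" using compact_multiples_upto[OF assms] by simp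
  obtain G where G: "openin (compact_open_top euclidean circle_top) G" "\<phi>0 \<in> G"
    "\<And>\<phi> y. \<phi> \<in> G \<Longrightarrow> y \<in> multiples_upto K m \<Longrightarrow> dist (\<phi> y) (\<phi>0 y) < 1"
    unfolding circle_top_def by (rule compact_open_top_nhd_uniform[OF L cont zero_less_one]) blast
  show "\<exists>N. openin dual_top N \<and> \<phi>0 \<in> N \<and> (\<forall>\<omega>\<in>bipolar_hom K. \<forall>\<phi>\<in>N. dist (\<omega> \<phi>) (\<omega> \<phi>0) < \<eta>)"
  proof (intro exI conjI ballI)
    show "openin dual_top (G \<inter> dual_chars)"
      using G(1) unfolding char_top_def by (rule openin_subtopology_Int)
    show "\<phi>0 \<in> G \<inter> dual_chars" using G(2) \<phi>0 by blast
  next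
    fix \<omega> \<phi> assume \<omega>: "\<omega> \<in> bipolar_hom K" and \<phi>: "\<phi> \<in> G \<inter> dual_chars"
    define \<psi> where "\<psi> = (\<lambda>x. \<phi> x * cnj (\<phi>0 x))"
    have \<psi>: "\<psi> \<in> dual_polar (multiples_upto K m)"
      unfolding \<psi>_def using \<phi> \<phi>0 G(3) by (intro quotient_in_dual_polar) auto
    then have "\<psi> \<in> dual_chars" by (simp add: polar_right_def)
    moreover have "\<phi> = (\<lambda>x. \<psi> x * \<phi>0 x)"
      by (simp add: \<psi>_def mult.assoc cnj_mult_self_dual_char[OF \<phi>0])
    ultimately have "\<omega> \<phi> = \<omega> \<psi> * \<omega> \<phi>0" using bipolar_hom_mult[OF \<omega> _ \<phi>0] by simp
    then have "\<omega> \<phi> - \<omega> \<phi>0 = (\<omega> \<psi> - 1) * \<omega> \<phi>0" by (simp add: algebra_simps)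
    then show "dist (\<omega> \<phi>) (\<omega> \<phi>0) < \<eta>"
      using m[OF \<omega> \<psi>] norm_bipolar_hom[OF \<omega> \<phi>0] by (simp add: dist_norm norm_mult)
  qed
qed

lemma bidual_chars_iff:
  "\<omega> \<in> bidual_chars \<longleftrightarrow> \<omega> \<in> extensional dual_chars \<and> continuous_map dual_top circle_top \<omega> \<and>
     (\<forall>\<phi>\<in>dual_chars. \<forall>\<psi>\<in>dual_chars. \<omega> (\<lambda>x. \<phi> x * \<psi> x) = \<omega> \<phi> * \<omega> \<psi>)"
  unfolding chars_def[of "dual_top :: ('a::topological_ab_group_add \<Rightarrow> complex) topology"] by simp

lemma bipolar_eq_bipolar_hom:
  assumes "compact K"
  shows "bipolar K = bipolar_hom K"
proof (intro set_eqI iffI)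
  fix \<omega> assume "\<omega> \<in> bipolar K"
  then have \<omega>: "\<omega> \<in> bidual_chars" "\<omega> ` dual_polar K \<subseteq> Lambda1"
    by (simp_all add: polar_right_def)
  then have "\<omega> \<in> (\<Pi>\<^sub>E \<phi>\<in>dual_chars. sphere 0 1)"
    using norm_char[OF \<omega>(1)] unfolding bidual_chars_iff by (simp add: PiE_iff)
  then show "\<omega> \<in> bipolar_hom K"
    using \<omega> unfolding bipolar_hom_def bidual_chars_iff by blast
next
  fix \<omega> assume \<omega>: "\<omega> \<in> bipolar_hom K"
  have "continuous_map dual_top euclidean \<omega>"
    by (rule continuous_map_if_equicontinuous[OF equicontinuous_bipolar_hom[OF assms] \<omega>])
  then have "continuous_map dual_top circle_top \<omega>"
    using norm_bipolar_hom[OF \<omega>] by (simp add: continuous_map_circle_top_iff)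
  then show "\<omega> \<in> bipolar K"
    using \<omega> unfolding bipolar_hom_def polar_right_def bidual_chars_iff by (auto simp: PiE_iff)
qed

lemma compactin_bipolar:
  assumes "compact K"
  shows "compactin bidual_top (bipolar K)"
proof -
  have "compactin (compact_open_top dual_top circle_top) (bipolar_hom K)"
    unfolding circle_top_def
    using equicontinuous_bipolar_hom[OF assms] closedin_bipolar_hom[of K]
    by (intro compactin_compact_open_top_if_equicontinuous) (simp_all add: circle_top_def)
  moreover have "bipolar_hom K \<subseteq> bidual_chars"
    using bipolar_eq_bipolar_hom[OF assms] by (auto simp: polar_right_def)
  ultimately have "compactin bidual_top (bipolar_hom K)"
    unfolding char_top_def[of "dual_top :: ('a \<Rightarrow> complex) topology"] compactin_subtopology by blast
  then show ?thesis using bipolar_eq_bipolar_hom[OF assms] by simp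
qed

lemma eval_map_preimage_bipolar:
  fixes K :: "'a::topological_ab_group_add set"
  assumes "\<And>a :: 'a. eval_map euclidean (+) a \<in> bidual_chars"
  shows "{a \<in> topspace euclidean. eval_map euclidean (+) a \<in> bipolar K} =
    polar_left euclidean (+) (dual_polar K)"
proof -
  have "eval_map euclidean (+) a \<in> bipolar K \<longleftrightarrow> (\<forall>\<gamma>\<in>dual_polar K. \<gamma> a \<in> Lambda1)" for a :: 'a
    using assms[of a] by (auto simp: polar_right_def eval_map_apply)
  then show ?thesis by (simp add: polar_left_def)
qed

lemma eval_map_preimage_subset_polar_left:
  fixes F :: "(('a::topological_ab_group_add \<Rightarrow> complex) \<Rightarrow> complex) set"
  assumes alpha_dual_cont: "continuous_map (dual_top :: ('a \<Rightarrow> complex) topology)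
      (char_top bidual_top (char_mult dual_top)) (eval_map dual_top (char_mult euclidean))"
    and F: "compactin bidual_top F"
  obtains K :: "'a set" where "compact K"
    "{a \<in> topspace euclidean. eval_map euclidean (+) a \<in> F} \<subseteq> polar_left euclidean (+) (dual_polar K)"
proof -
  let ?\<alpha>' = "eval_map dual_top (char_mult euclidean) :: ('a \<Rightarrow> complex) \<Rightarrow> _"
  have F_chars: "F \<subseteq> bidual_chars" using compactin_subset_topspace[OF F] by simp
  have eval_F: "?\<alpha>' \<gamma> \<omega> = \<omega> \<gamma>" if "\<omega> \<in> F" for \<gamma> \<omega>
    using F_chars that by (intro eval_map_apply) blast
  \<comment> \<open>\<open>Lambda1\<close> is not open, so we pass to the open right half circle \<open>Lo \<subseteq> Lambda1\<close>.\<close>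
  define Lo where "Lo = sphere (0::complex) 1 \<inter> {z. 0 < Re z}"
  have "openin circle_top Lo"
    unfolding circle_top_def Lo_def by (intro openin_open_Int open_halfspace_Re_gt)
  then have "openin (char_top bidual_top (char_mult dual_top))
      ({h. h ` F \<subseteq> Lo} \<inter> chars bidual_top (char_mult dual_top))"
    unfolding char_top_def[of "bidual_top :: (('a \<Rightarrow> complex) \<Rightarrow> complex) topology"]
    by (intro openin_subtopology_Int openin_compact_open_top_subbasic F)
  then have "openin dual_top {\<gamma> \<in> topspace dual_top.
      ?\<alpha>' \<gamma> \<in> {h. h ` F \<subseteq> Lo} \<inter> chars bidual_top (char_mult dual_top)}" (is "openin _ ?N")
    by (rule openin_continuous_map_preimage[OF alpha_dual_cont])
  moreover have "?\<alpha>' (\<lambda>_. 1) \<omega> \<in> Lo" if "\<omega> \<in> F" for \<omega>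
  proof -
    have "\<omega> (\<lambda>_. 1) = 1"
      using that F_chars char_idempotent[of \<omega> dual_top "char_mult euclidean" "\<lambda>_. 1"] dual_chars_one
      by auto
    then show ?thesis using eval_F[OF that] by (simp add: Lo_def)
  qed
  then have "(\<lambda>_. 1) \<in> ?N"
    using dual_chars_one continuous_map_image_subset_topspace[OF alpha_dual_cont] by auto
  ultimately obtain K :: "'a set" where K: "compact K" "dual_polar K \<subseteq> ?N"
    by (rule dual_polar_subset_nhd)
  have "\<gamma> a \<in> Lambda1" if "eval_map euclidean (+) a \<in> F" "\<gamma> \<in> dual_polar K" for a \<gamma>
  proof -
    have "?\<alpha>' \<gamma> (eval_map euclidean (+) a) \<in> Lo" using that K(2) by blast
    moreover have "\<gamma> \<in> dual_chars" using that(2) by (simp add: polar_right_def)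
    ultimately show ?thesis using that(1) eval_F by (auto simp: eval_map_apply Lo_def Lambda1_eq)
  qed
  then show thesis using K(1) by (intro that) (auto simp: polar_left_def)
qed

lemma qc_compactness_property_if_compact_preimages:
  assumes alpha_cont: "continuous_map euclidean bidual_top (eval_map euclidean (+) :: 'a::topological_ab_group_add \<Rightarrow> _)"
    and preimages: "\<forall>F. compactin bidual_top F \<longrightarrow>
      compactin euclidean {a \<in> topspace (euclidean :: 'a topology). eval_map euclidean (+) a \<in> F}"
  shows "qc_compactness_property (euclidean :: 'a topology) (+)"
  unfolding qc_compactness_property_def
proof (intro allI impI)
  fix K :: "'a set" assume "compactin euclidean K"
  then have "compactin bidual_top (bipolar K)" by (simp add: compactin_bipolar)
  moreover have "eval_map euclidean (+) a \<in> bidual_chars" for a :: 'a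
    using continuous_map_image_subset_topspace[OF alpha_cont] by auto
  ultimately show "compactin euclidean (polar_left euclidean (+) (dual_polar K))"
    using preimages by (simp flip: eval_map_preimage_bipolar)
qed

lemma compact_preimages_if_qc_compactness_property:
  fixes F :: "(('a::topological_ab_group_add \<Rightarrow> complex) \<Rightarrow> complex) set"
  assumes alpha_cont: "continuous_map euclidean bidual_top (eval_map euclidean (+) :: 'a \<Rightarrow> _)"
    and alpha_dual_cont: "continuous_map (dual_top :: ('a \<Rightarrow> complex) topology)
      (char_top bidual_top (char_mult dual_top)) (eval_map dual_top (char_mult euclidean))"
    and qc: "qc_compactness_property (euclidean :: 'a topology) (+)"
    and F: "compactin bidual_top F"
  shows "compactin euclidean {a \<in> topspace euclidean. eval_map euclidean (+) a \<in> F}"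
proof -
  obtain K :: "'a set" where K: "compact K"
    "{a \<in> topspace euclidean. eval_map euclidean (+) a \<in> F} \<subseteq> polar_left euclidean (+) (dual_polar K)"
    by (rule eval_map_preimage_subset_polar_left[OF alpha_dual_cont F])
  have "closedin euclidean {a \<in> topspace euclidean. eval_map euclidean (+) a \<in> F}"
    using compactin_imp_closedin[OF Hausdorff_space_char_top F]
    by (rule closedin_continuous_map_preimage[OF alpha_cont])
  moreover have "compactin euclidean (polar_left euclidean (+) (dual_polar K))"
    using qc K(1) unfolding qc_compactness_property_def by simp
  ultimately show ?thesis using K(2) closed_compactin by blast
qed

theorem mainTheorem9:
  fixes A :: "'a::{topological_ab_group_add, t2_space} itself"
  defines "X \<equiv> (euclidean :: 'a topology)"
  assumes alphaA_cont:
    "continuous_map X (char_top (char_top X (+)) (char_mult X)) (eval_map X (+))"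
  assumes alphaAhat_cont:
    "continuous_map (char_top X (+))
       (char_top (char_top (char_top X (+)) (char_mult X)) (char_mult (char_top X (+))))
       (eval_map (char_top X (+)) (char_mult X))"
  shows "(\<forall>F. compactin (char_top (char_top X (+)) (char_mult X)) F \<longrightarrow>
             compactin X {a \<in> topspace X. eval_map X (+) a \<in> F})
         \<longleftrightarrow> qc_compactness_property X (+)"
  unfolding X_def
proof (intro iffI allI impI)
  show "qc_compactness_property (euclidean :: 'a topology) (+)"
    if "\<forall>F. compactin bidual_top F \<longrightarrow>
      compactin euclidean {a \<in> topspace (euclidean :: 'a topology). eval_map euclidean (+) a \<in> F}"
    using alphaA_cont that unfolding X_def by (rule qc_compactness_property_if_compact_preimages)
  show "compactin euclidean {a \<in> topspace (euclidean :: 'a topology). eval_map euclidean (+) a \<in> F}"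
    if "qc_compactness_property (euclidean :: 'a topology) (+)" "compactin bidual_top F" for F
    using alphaA_cont alphaAhat_cont that unfolding X_def
    by (rule compact_preimages_if_qc_compactness_property)
qed

end
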